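(* Let $K$ be a nonempty convex subset of a real Hausdorff locally convex topological vector space $X$, let $Y$ be a nonempty finite set and let $U\subseteq K$ be self-segment-dense in $K$. Let $f:K\times Y\to\mathbb R$ satisfy: (i) for every $y\in Y$ the map $x\mapsto f(x,y)$ is convex and lower semicontinuous on $U$; (ii) for all $y_1,y_2\in Y$ and $t\in[0,1]$ there exists $y_3\in Y$ with $f(x,y_3)\ge(1-t)f(x,y_1)+tf(x,y_2)$ for all $x\in U$; (iii) for every $y\in Y$ the infimum $\inf_{x\in U}f(x,y)$ is attained. Then $$\inf_{x\in U}\sup_{y\in Y}f(x,y)=\sup_{y\in Y}\min_{x\in U}f(x,y).$$
   Context: $[x,y]=\{x+t(y-x):t\in[0,1]\}$. Convex on $U$: $h((1-t)u+tv)\le(1-t)h(u)+th(v)$ whenever $u,v\in U$, $t\in[0,1]$, $(1-t)u+tv\in U$. Lower semicontinuous on $U$: for every $u\in U$ and net $(u_i)\subseteq U$ with $u_i\to u$, $\liminf h(u_i)\ge h(u)$. Self-segment-dense: for convex $V$ and $U\subseteq V$, $U$ is self-segment-dense in $V$ if $V\subseteq\operatorname{cl}U$ and for all $x,y\in U$, $[x,y]\cap U$ is dense in $[x,y]$. *)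

theory Defs
  imports "HOL-Analysis.Analysis"
begin

text \<open>The topology of the type 'a (class t2_space, hence Hausdorff) makes the real vector
space 'a a locally convex topological vector space.\<close>
definition locally_convex_tvs :: "'a::{real_vector,t2_space} itself \<Rightarrow> bool" where
  "locally_convex_tvs _ \<longleftrightarrow>
     continuous_on UNIV (\<lambda>p::'a \<times> 'a. fst p + snd p) \<and>
     continuous_on UNIV (\<lambda>p::real \<times> 'a. fst p *\<^sub>R snd p) \<and>
     (\<forall>W::'a set. open W \<and> 0 \<in> W \<longrightarrow> (\<exists>V. open V \<and> convex V \<and> 0 \<in> V \<and> V \<subseteq> W))"

definition convex_on_set :: "'a::real_vector set \<Rightarrow> ('a \<Rightarrow> real) \<Rightarrow> bool" where
  "convex_on_set U h \<longleftrightarrow>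
     (\<forall>u\<in>U. \<forall>v\<in>U. \<forall>t::real. 0 \<le> t \<and> t \<le> 1 \<and> (1 - t) *\<^sub>R u + t *\<^sub>R v \<in> U \<longrightarrow>
        h ((1 - t) *\<^sub>R u + t *\<^sub>R v) \<le> (1 - t) * h u + t * h v)"

text \<open>Lower semicontinuity on U (relative topology); the filter formulation is
equivalent to the net formulation.\<close>
definition lsc_on_set :: "'a::topological_space set \<Rightarrow> ('a \<Rightarrow> real) \<Rightarrow> bool" where
  "lsc_on_set U h \<longleftrightarrow>
     (\<forall>u\<in>U. \<forall>c. c < h u \<longrightarrow> eventually (\<lambda>v. c < h v) (at u within U))"

definition self_segment_dense :: "'a::{real_vector,topological_space} set \<Rightarrow> 'a set \<Rightarrow> bool" where
  "self_segment_dense U V \<longleftrightarrow>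
     U \<subseteq> V \<and> V \<subseteq> closure U \<and>
     (\<forall>x\<in>U. \<forall>y\<in>U. closed_segment x y \<subseteq> closure (closed_segment x y \<inter> U))"

end

(*
  Since Y is finite and convexity holds along segments, self-segment-density of U turns the
  convexity of each f(-,y) into approximate convexity of the whole family on U: for u, v in U
  and t in [0,1] some single point w of U has f(w,y) <= (1-t) f(u,y) + t f(v,y) + e for all y.
  For two functions g, h that are jointly approximately convex on V with max(g,h) > c on V,
  the parameters at which the segments of the graph cross level c separate, so some convex
  combination (1-t) g + t h is >= c on V. Induction over a finite set F of indices covering V
  at level c, passing to the approximately convex sublevel set {f(-,z) < c}, and merging the
  two resulting indices with the concave-likeness (ii), yields a single y with f(-,y) > d on U
  for every d < c. This gives inf sup <= sup inf; the converse is weak duality.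
*)

theory Submission
  imports Defs
begin

definition approx_convex_on :: "'a set \<Rightarrow> 'b set \<Rightarrow> ('a \<Rightarrow> 'b \<Rightarrow> real) \<Rightarrow> bool" where
  "approx_convex_on V Y f \<longleftrightarrow>
     (\<forall>u\<in>V. \<forall>v\<in>V. \<forall>t\<in>{0..1}. \<forall>e>0. \<exists>w\<in>V. \<forall>y\<in>Y. f w y \<le> (1 - t) * f u y + t * f v y + e)"

lemma approx_convex_on_subset:
  "approx_convex_on V Y f \<Longrightarrow> Z \<subseteq> Y \<Longrightarrow> approx_convex_on V Z f"
  unfolding approx_convex_on_def by blast

lemma approx_convex_on_sublevel:
  assumes conv: "approx_convex_on V Y f" and z: "z \<in> Y"
  shows "approx_convex_on {x\<in>V. f x z < c} Y f"
  unfolding approx_convex_on_def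
proof (intro ballI allI impI)
  fix u v and t e :: real
  assume u: "u \<in> {x\<in>V. f x z < c}" and v: "v \<in> {x\<in>V. f x z < c}" and t: "t \<in> {0..1}" and "0 < e"
  define m where "m = max (f u z) (f v z)"
  define e' where "e' = min e ((c - m) / 2)"
  have "m < c" using u v by (simp add: m_def)
  hence "e' > 0" "e' \<le> e" "e' \<le> (c - m) / 2" using \<open>0 < e\<close> by (auto simp: e'_def min_def)
  then obtain w where "w \<in> V" and w: "\<forall>y\<in>Y. f w y \<le> (1 - t) * f u y + t * f v y + e'"
    using conv u v t unfolding approx_convex_on_def by blast
  have "f w z \<le> (1 - t) * f u z + t * f v z + e'" using w z by blast
  also have "\<dots> \<le> m + e'"
    using t by (auto simp: m_def intro!: convex_bound_le)
  also have "\<dots> < c" using \<open>m < c\<close> \<open>e' \<le> (c - m) / 2\<close> by argo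
  finally have "w \<in> {x\<in>V. f x z < c}" using \<open>w \<in> V\<close> by simp
  moreover have "\<forall>y\<in>Y. f w y \<le> (1 - t) * f u y + t * f v y + e"
    using w \<open>e' \<le> e\<close> by force
  ultimately show "\<exists>w\<in>{x\<in>V. f x z < c}. \<forall>y\<in>Y. f w y \<le> (1 - t) * f u y + t * f v y + e"
    by blast
qed

lemma approx_convex_pair_crossing:
  assumes conv: "approx_convex_on V {a, b} f"
    and cover: "\<forall>x\<in>V. c < f x a \<or> c < f x b"
    and x1: "x1 \<in> V" "f x1 a \<le> c" and x2: "x2 \<in> V" "f x2 b \<le> c"
  shows "(c - f x1 a) / (f x1 b - f x1 a) \<le> (f x2 a - c) / (f x2 a - f x2 b)"
proof (rule ccontr)
  \<comment> \<open>otherwise some convex combination of x1 and x2 is below c at both a and b, and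
     approximate convexity produces a point of V contradicting cover\<close>
  define G1 where "G1 = f x1 a - c"
  define H1 where "H1 = f x1 b - c"
  define G2 where "G2 = f x2 a - c"
  define H2 where "H2 = f x2 b - c"
  have "G1 \<le> 0" "H1 > 0" "G2 > 0" "H2 \<le> 0"
    using cover x1 x2 by (force simp: G1_def H1_def G2_def H2_def)+
  assume "\<not> ?thesis"
  hence "- G1 / (H1 - G1) > G2 / (G2 - H2)" by (simp add: G1_def H1_def G2_def H2_def)
  hence "H1 * G2 < G1 * H2"
    using \<open>G1 \<le> 0\<close> \<open>H1 > 0\<close> \<open>G2 > 0\<close> \<open>H2 \<le> 0\<close> by (simp add: divide_simps algebra_simps)
  define p where "p = H1 / (H1 - H2)"
  define q where "q = - G1 / (G2 - G1)"
  have "0 < p" "q < 1" "p < q"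
    using \<open>H1 * G2 < G1 * H2\<close> \<open>G1 \<le> 0\<close> \<open>H1 > 0\<close> \<open>G2 > 0\<close> \<open>H2 \<le> 0\<close>
    by (auto simp: p_def q_def divide_simps algebra_simps)
  define s where "s = (p + q) / 2"
  have "0 \<le> s" "s \<le> 1" "p < s" "s < q" using \<open>0 < p\<close> \<open>q < 1\<close> \<open>p < q\<close> by (auto simp: s_def)
  hence s: "0 \<le> s" "s \<le> 1"
    and below: "(1 - s) * f x1 a + s * f x2 a < c" "(1 - s) * f x1 b + s * f x2 b < c"
    using \<open>G1 \<le> 0\<close> \<open>H1 > 0\<close> \<open>G2 > 0\<close> \<open>H2 \<le> 0\<close>
    by (auto simp: p_def q_def G1_def H1_def G2_def H2_def divide_simps algebra_simps)
  define m where "m = max ((1 - s) * f x1 a + s * f x2 a) ((1 - s) * f x1 b + s * f x2 b)"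
  define e where "e = (c - m) / 2"
  have "m < c" using below by (simp add: m_def)
  hence "e > 0" by (simp add: e_def)
  then obtain w where "w \<in> V"
    and w: "\<forall>y\<in>{a, b}. f w y \<le> (1 - s) * f x1 y + s * f x2 y + e"
    using conv x1 x2 s unfolding approx_convex_on_def by (meson atLeastAtMost_iff)
  have "f w a \<le> m + e" "f w b \<le> m + e" using w by (auto simp: m_def intro: order.trans)
  hence "f w a < c" "f w b < c" using \<open>m < c\<close> by (auto simp: e_def field_simps)
  thus False using cover \<open>w \<in> V\<close> by force
qed

lemma real_unit_interval_separation:
  fixes A B :: "real set"
  assumes "A \<subseteq> {0..1}" "B \<subseteq> {0..1}" "\<And>a b. a \<in> A \<Longrightarrow> b \<in> B \<Longrightarrow> a \<le> b"
  shows "\<exists>t\<in>{0..1}. (\<forall>a\<in>A. a \<le> t) \<and> (\<forall>b\<in>B. t \<le> b)"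
proof -
  have bdd: "bdd_above (insert 0 A)" using assms(1) by (intro bdd_aboveI[where M=1]) auto
  show ?thesis
  proof (intro bexI conjI ballI)
    show "a \<le> Sup (insert 0 A)" if "a \<in> A" for a using that bdd by (simp add: cSup_upper)
    show "Sup (insert 0 A) \<le> b" if "b \<in> B" for b
      using that assms by (intro cSup_least) auto
    show "Sup (insert 0 A) \<in> {0..1}"
      using assms(1) bdd by (auto intro: cSup_upper intro!: cSup_least)
  qed
qed

lemma approx_convex_pair_minimax:
  assumes conv: "approx_convex_on V {a, b} f"
    and cover: "\<forall>x\<in>V. c < f x a \<or> c < f x b"
  shows "\<exists>t\<in>{0..1}. \<forall>x\<in>V. c \<le> (1 - t) * f x a + t * f x b"
proof -
  \<comment> \<open>a point with f x a \<le> c forces t into [r, 1] with r in A, one with f x b \<le> c into [0, r] with r in B\<close>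
  define A where "A = (\<lambda>x. (c - f x a) / (f x b - f x a)) ` {x\<in>V. f x a \<le> c}"
  define B where "B = (\<lambda>x. (f x a - c) / (f x a - f x b)) ` {x\<in>V. f x b \<le> c}"
  have "A \<subseteq> {0..1}"
  proof
    fix r assume "r \<in> A"
    then obtain x where "x \<in> V" "f x a \<le> c" and r: "r = (c - f x a) / (f x b - f x a)"
      unfolding A_def by blast
    moreover have "c < f x b" using cover \<open>x \<in> V\<close> \<open>f x a \<le> c\<close> by force
    ultimately show "r \<in> {0..1}" unfolding r by (auto simp: divide_simps)
  qed
  moreover have "B \<subseteq> {0..1}"
  proof
    fix r assume "r \<in> B"
    then obtain x where "x \<in> V" "f x b \<le> c" and r: "r = (f x a - c) / (f x a - f x b)"
      unfolding B_def by blast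
    moreover have "c < f x a" using cover \<open>x \<in> V\<close> \<open>f x b \<le> c\<close> by force
    ultimately show "r \<in> {0..1}" unfolding r by (auto simp: divide_simps)
  qed
  moreover have "r \<le> r'" if "r \<in> A" "r' \<in> B" for r r'
    using that approx_convex_pair_crossing[OF conv cover] unfolding A_def B_def by auto
  ultimately obtain t where t: "t \<in> {0..1}" "\<forall>r\<in>A. r \<le> t" "\<forall>r\<in>B. t \<le> r"
    using real_unit_interval_separation by blast
  have "c \<le> (1 - t) * f x a + t * f x b" if "x \<in> V" for x
  proof (cases "f x a \<le> c")
    case True
    with cover \<open>x \<in> V\<close> have "c < f x b" by force
    moreover have "(c - f x a) / (f x b - f x a) \<le> t" using t(2) \<open>x \<in> V\<close> True by (auto simp: A_def)
    ultimately show ?thesis using True by (simp add: divide_simps algebra_simps)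
  next
    case False
    show ?thesis
    proof (cases "f x b \<le> c")
      case True
      have "t \<le> (f x a - c) / (f x a - f x b)" using t(3) \<open>x \<in> V\<close> True by (auto simp: B_def)
      thus ?thesis using False True by (simp add: divide_simps algebra_simps)
    next
      case _: False
      have "(1 - t) * c \<le> (1 - t) * f x a" "t * c \<le> t * f x b"
        using \<open>\<not> f x a \<le> c\<close> \<open>\<not> f x b \<le> c\<close> t(1) by (auto intro: mult_left_mono)
      thus ?thesis by (simp add: algebra_simps)
    qed
  qed
  with t(1) show ?thesis by blast
qed

lemma approx_convex_finite_cover_bound:
  assumes concavelike: "\<forall>y1\<in>Y. \<forall>y2\<in>Y. \<forall>t::real. 0 \<le> t \<and> t \<le> 1 \<longrightarrow>
               (\<exists>y3\<in>Y. \<forall>x\<in>U. f x y3 \<ge> (1 - t) * f x y1 + t * f x y2)"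
    and "Y \<noteq> {}" "finite F" "F \<subseteq> Y" "V \<subseteq> U" "approx_convex_on V Y f"
    and "\<forall>x\<in>V. \<exists>y\<in>F. c < f x y" "d < c"
  shows "\<exists>y\<in>Y. \<forall>x\<in>V. d < f x y"
  using assms(3-)
proof (induction F arbitrary: V c d rule: finite_induct)
  case empty
  then show ?case using \<open>Y \<noteq> {}\<close> by auto
next
  case (insert z F)
  define d' where "d' = (c + d) / 2"
  have "d < d'" "d' < c" using \<open>d < c\<close> by (auto simp: d'_def field_simps)
  \<comment> \<open>F covers the sublevel set of f(-,z), where the induction hypothesis gives y'; the pair y', z
     covers V at level d' and is merged into one index by the two-function case and (ii)\<close>
  have "z \<in> Y" using insert.prems by simp
  have "\<forall>x\<in>{x\<in>V. f x z < c}. \<exists>y\<in>F. c < f x y" using insert.prems(4) by fastforce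
  moreover have "approx_convex_on {x\<in>V. f x z < c} Y f"
    using approx_convex_on_sublevel[OF \<open>approx_convex_on V Y f\<close> \<open>z \<in> Y\<close>] .
  ultimately obtain y' where "y' \<in> Y" and y': "\<forall>x\<in>{x\<in>V. f x z < c}. d' < f x y'"
    using insert.IH[of "{x\<in>V. f x z < c}" c d'] insert.prems(1,2) \<open>d' < c\<close> by auto
  have "\<forall>x\<in>V. d' < f x y' \<or> d' < f x z" using y' \<open>d' < c\<close> by (auto simp: not_less)
  moreover have "approx_convex_on V {y', z} f"
    using approx_convex_on_subset insert.prems(3) \<open>y' \<in> Y\<close> \<open>z \<in> Y\<close> by blast
  ultimately obtain t where t: "t \<in> {0..1}" "\<forall>x\<in>V. d' \<le> (1 - t) * f x y' + t * f x z"
    by (metis approx_convex_pair_minimax)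
  then obtain y3 where "y3 \<in> Y" and y3: "\<forall>x\<in>U. (1 - t) * f x y' + t * f x z \<le> f x y3"
    using concavelike[rule_format, OF \<open>y' \<in> Y\<close> \<open>z \<in> Y\<close>, of t] by auto
  have "\<forall>x\<in>V. d < f x y3"
  proof
    fix x assume "x \<in> V"
    then have "d' \<le> f x y3" using t(2) y3 \<open>V \<subseteq> U\<close> by (meson order.trans subsetD)
    with \<open>d < d'\<close> show "d < f x y3" by simp
  qed
  with \<open>y3 \<in> Y\<close> show ?case by blast
qed

lemma locally_convex_tvs_continuous_segment:
  fixes u v :: "'a::{real_vector,t2_space}"
  assumes "locally_convex_tvs TYPE('a)"
  shows "continuous_on S (\<lambda>s. (1 - s) *\<^sub>R u + s *\<^sub>R v)"
proof -
  have add: "continuous_on UNIV (\<lambda>p::'a \<times> 'a. fst p + snd p)"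
    and scale: "continuous_on UNIV (\<lambda>p::real \<times> 'a. fst p *\<^sub>R snd p)"
    using assms unfolding locally_convex_tvs_def by auto
  have "continuous_on UNIV (\<lambda>s::real. (1 - s) *\<^sub>R u)"
    using continuous_on_compose2[OF scale, of UNIV "\<lambda>s. (1 - s, u)"] by (simp add: continuous_intros)
  moreover have "continuous_on UNIV (\<lambda>s::real. s *\<^sub>R v)"
    using continuous_on_compose2[OF scale, of UNIV "\<lambda>s. (s, v)"] by (simp add: continuous_intros)
  ultimately have "continuous_on UNIV (\<lambda>s. (1 - s) *\<^sub>R u + s *\<^sub>R v)"
    using continuous_on_compose2[OF add continuous_on_Pair] by fastforce
  then show ?thesis by (rule continuous_on_subset) simp
qed

lemma mem_closure_preimage_injective_arc:
  fixes \<phi> :: "real \<Rightarrow> 'a::t2_space"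
  assumes cont: "continuous_on {0..1} \<phi>" and inj: "inj_on \<phi> {0..1}"
    and t: "t \<in> {0..1}" and dense: "\<phi> t \<in> closure (\<phi> ` {0..1} \<inter> U)"
  shows "t \<in> closure {s\<in>{0..1}. \<phi> s \<in> U}"
proof -
  define T where "T = closure {s\<in>{0..1}. \<phi> s \<in> U}"
  have "T \<subseteq> {0..1}" unfolding T_def by (rule closure_minimal) auto
  then have "compact T"
    by (metis T_def bounded_closed_interval bounded_subset closed_closure compact_eq_bounded_closed)
  then have "closed (\<phi> ` T)"
    using \<open>T \<subseteq> {0..1}\<close> by (intro compact_imp_closed compact_continuous_image continuous_on_subset[OF cont])
  moreover have "\<phi> ` {0..1} \<inter> U \<subseteq> \<phi> ` T" unfolding T_def using closure_subset by fastforce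
  ultimately have "\<phi> t \<in> \<phi> ` T" using dense closure_minimal by blast
  then obtain s where "s \<in> T" "\<phi> s = \<phi> t" by (metis imageE)
  with inj t \<open>T \<subseteq> {0..1}\<close> have "s = t" by (auto dest: inj_onD)
  with \<open>s \<in> T\<close> show ?thesis by (simp add: T_def)
qed

lemma approx_convex_on_segment_dense:
  fixes U :: "'a::{real_vector,t2_space} set" and f :: "'a \<Rightarrow> 'b \<Rightarrow> real"
  assumes lctvs: "locally_convex_tvs TYPE('a)" and "finite Y"
    and seg_dense: "\<forall>u\<in>U. \<forall>v\<in>U. closed_segment u v \<subseteq> closure (closed_segment u v \<inter> U)"
    and convex: "\<forall>y\<in>Y. convex_on_set U (\<lambda>x. f x y)"
  shows "approx_convex_on U Y f"
  unfolding approx_convex_on_def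
proof (intro ballI allI impI)
  fix u v and t e :: real
  assume u: "u \<in> U" and v: "v \<in> U" and t: "t \<in> {0..1}" and "0 < e"
  show "\<exists>w\<in>U. \<forall>y\<in>Y. f w y \<le> (1 - t) * f u y + t * f v y + e"
  proof (cases "u = v")
    case True
    with u \<open>0 < e\<close> show ?thesis by (intro bexI[of _ u]) (auto simp: algebra_simps)
  next
    case False
    define \<phi> where "\<phi> = (\<lambda>s. (1 - s) *\<^sub>R u + s *\<^sub>R v)"
    have "inj_on \<phi> {0..1}"
    proof (rule inj_onI)
      fix s s' assume "\<phi> s = \<phi> s'"
      then have "(s - s') *\<^sub>R (v - u) = 0" by (simp add: \<phi>_def algebra_simps)
      with False show "s = s'" by simp
    qed
    moreover have "\<phi> t \<in> closure (\<phi> ` {0..1} \<inter> U)"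
      using seg_dense u v t unfolding \<phi>_def closed_segment_image_interval by blast
    ultimately have "t \<in> closure {s\<in>{0..1}. \<phi> s \<in> U}"
      using mem_closure_preimage_injective_arc locally_convex_tvs_continuous_segment[OF lctvs] t
      unfolding \<phi>_def by blast
    \<comment> \<open>moving the parameter from t to s changes each convex combination by at most |s - t| M\<close>
    define M where "M = (\<Sum>y\<in>Y. \<bar>f v y - f u y\<bar>)"
    have "0 \<le> M" by (simp add: M_def sum_nonneg)
    define \<delta> where "\<delta> = e / (M + 1)"
    have "\<delta> > 0" "\<delta> * M \<le> e" using \<open>0 \<le> M\<close> \<open>0 < e\<close> by (auto simp: \<delta>_def field_simps)
    then obtain s where s: "s \<in> {0..1}" "\<phi> s \<in> U" "\<bar>s - t\<bar> < \<delta>"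
      using \<open>t \<in> closure _\<close> unfolding closure_approachable dist_real_def by blast
    show ?thesis
    proof (intro bexI ballI)
      fix y assume "y \<in> Y"
      then have "f (\<phi> s) y \<le> (1 - s) * f u y + s * f v y"
        using convex u v s unfolding convex_on_set_def \<phi>_def by auto
      also have "\<dots> = (1 - t) * f u y + t * f v y + (s - t) * (f v y - f u y)"
        by (simp add: algebra_simps)
      also have "(s - t) * (f v y - f u y) \<le> \<bar>s - t\<bar> * \<bar>f v y - f u y\<bar>"
        by (metis abs_ge_self abs_mult)
      also have "\<dots> \<le> \<delta> * M"
        using s(3) member_le_sum[of y Y "\<lambda>y. \<bar>f v y - f u y\<bar>"] \<open>finite Y\<close> \<open>y \<in> Y\<close>
        by (intro mult_mono) (auto simp: M_def)
      finally show "f (\<phi> s) y \<le> (1 - t) * f u y + t * f v y + e" using \<open>\<delta> * M \<le> e\<close> by simp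
    qed (use s in simp)
  qed
qed

lemma Max_Inf_le_Inf_Max:
  fixes f :: "'a \<Rightarrow> 'b \<Rightarrow> 'c::conditionally_complete_linorder"
  assumes "U \<noteq> {}" "finite Y" "Y \<noteq> {}" "\<forall>y\<in>Y. bdd_below ((\<lambda>x. f x y) ` U)"
  shows "(MAX y\<in>Y. INF x\<in>U. f x y) \<le> (INF x\<in>U. MAX y\<in>Y. f x y)"
proof -
  have "(INF x\<in>U. f x y) \<le> (INF x\<in>U. MAX y\<in>Y. f x y)" if "y \<in> Y" for y
  proof (rule cINF_greatest[OF \<open>U \<noteq> {}\<close>])
    fix x assume "x \<in> U"
    with assms that have "(INF x\<in>U. f x y) \<le> f x y" by (intro cINF_lower) auto
    also have "\<dots> \<le> (MAX y\<in>Y. f x y)" using assms that by (simp add: Max_ge)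
    finally show "(INF x\<in>U. f x y) \<le> (MAX y\<in>Y. f x y)" .
  qed
  then show ?thesis using assms by simp
qed

lemma bdd_below_image_Max:
  fixes f :: "'a \<Rightarrow> 'b \<Rightarrow> 'c::linorder"
  assumes "finite Y" "y0 \<in> Y" "bdd_below ((\<lambda>x. f x y0) ` U)"
  shows "bdd_below ((\<lambda>x. MAX y\<in>Y. f x y) ` U)"
proof -
  obtain m where m: "\<forall>x\<in>U. m \<le> f x y0" using assms(3) by (auto simp: bdd_below_def)
  show ?thesis
  proof (rule bdd_belowI2)
    fix x assume "x \<in> U"
    with m have "m \<le> f x y0" by blast
    also have "\<dots> \<le> (MAX y\<in>Y. f x y)" using assms(1,2) by (simp add: Max_ge)
    finally show "m \<le> (MAX y\<in>Y. f x y)" .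
  qed
qed

lemma Inf_Max_le_Max_Inf_approx_convex:
  fixes f :: "'a \<Rightarrow> 'b \<Rightarrow> real"
  assumes concavelike: "\<forall>y1\<in>Y. \<forall>y2\<in>Y. \<forall>t::real. 0 \<le> t \<and> t \<le> 1 \<longrightarrow>
               (\<exists>y3\<in>Y. \<forall>x\<in>U. f x y3 \<ge> (1 - t) * f x y1 + t * f x y2)"
    and "finite Y" "Y \<noteq> {}" "U \<noteq> {}" "approx_convex_on U Y f"
    and bdd: "\<forall>y\<in>Y. bdd_below ((\<lambda>x. f x y) ` U)"
  shows "(INF x\<in>U. MAX y\<in>Y. f x y) \<le> (MAX y\<in>Y. INF x\<in>U. f x y)"
proof (rule dense_le)
  fix d assume "d < (INF x\<in>U. MAX y\<in>Y. f x y)"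
  define c where "c = (d + (INF x\<in>U. MAX y\<in>Y. f x y)) / 2"
  have "d < c" "c < (INF x\<in>U. MAX y\<in>Y. f x y)"
    using \<open>d < _\<close> by (auto simp: c_def field_simps)
  obtain y0 where "y0 \<in> Y" using \<open>Y \<noteq> {}\<close> by blast
  with bdd have "bdd_below ((\<lambda>x. f x y0) ` U)" by (rule bspec)
  then have bdd_Max: "bdd_below ((\<lambda>x. MAX y\<in>Y. f x y) ` U)"
    by (rule bdd_below_image_Max[OF \<open>finite Y\<close> \<open>y0 \<in> Y\<close>])
  have "\<forall>x\<in>U. \<exists>y\<in>Y. c < f x y"
  proof
    fix x assume "x \<in> U"
    with bdd_Max have "(INF x\<in>U. MAX y\<in>Y. f x y) \<le> (MAX y\<in>Y. f x y)" by (rule cINF_lower)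
    with \<open>c < _\<close> have "c < (MAX y\<in>Y. f x y)" by linarith
    then show "\<exists>y\<in>Y. c < f x y" using \<open>finite Y\<close> \<open>Y \<noteq> {}\<close> by (simp add: Max_gr_iff)
  qed
  then obtain y where "y \<in> Y" "\<forall>x\<in>U. d < f x y"
    using approx_convex_finite_cover_bound[OF concavelike \<open>Y \<noteq> {}\<close> \<open>finite Y\<close> order_refl order_refl
        \<open>approx_convex_on U Y f\<close> _ \<open>d < c\<close>] by blast
  then have "d \<le> (INF x\<in>U. f x y)" using \<open>U \<noteq> {}\<close> by (auto intro: cINF_greatest less_imp_le)
  also have "\<dots> \<le> (MAX y\<in>Y. INF x\<in>U. f x y)" using \<open>finite Y\<close> \<open>y \<in> Y\<close> by (simp add: Max_ge)
  finally show "d \<le> (MAX y\<in>Y. INF x\<in>U. f x y)" .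
qed

theorem mainTheorem14:
  fixes K U :: "'a::{real_vector,t2_space} set"
    and Y :: "'b set"
    and f :: "'a \<Rightarrow> 'b \<Rightarrow> real"
  assumes lctvs: "locally_convex_tvs TYPE('a)"
    and K: "convex K" "K \<noteq> {}"
    and Y: "finite Y" "Y \<noteq> {}"
    and U: "self_segment_dense U K"
    and i: "\<forall>y\<in>Y. convex_on_set U (\<lambda>x. f x y) \<and> lsc_on_set U (\<lambda>x. f x y)"
    and ii: "\<forall>y1\<in>Y. \<forall>y2\<in>Y. \<forall>t::real. 0 \<le> t \<and> t \<le> 1 \<longrightarrow>
               (\<exists>y3\<in>Y. \<forall>x\<in>U. f x y3 \<ge> (1 - t) * f x y1 + t * f x y2)"
    and iii: "\<forall>y\<in>Y. \<exists>x0\<in>U. \<forall>x\<in>U. f x0 y \<le> f x y"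
  shows "(INF x\<in>U. MAX y\<in>Y. f x y) = (MAX y\<in>Y. INF x\<in>U. f x y)"
proof -
  have "U \<noteq> {}" using U K(2) by (auto simp: self_segment_dense_def)
  have bdd: "\<forall>y\<in>Y. bdd_below ((\<lambda>x. f x y) ` U)"
    using iii by (meson bdd_belowI2)
  have "approx_convex_on U Y f"
    using approx_convex_on_segment_dense[OF lctvs Y(1)] U i unfolding self_segment_dense_def by blast
  then have "(INF x\<in>U. MAX y\<in>Y. f x y) \<le> (MAX y\<in>Y. INF x\<in>U. f x y)"
    using Inf_Max_le_Max_Inf_approx_convex[OF ii Y \<open>U \<noteq> {}\<close>] bdd by blast
  moreover have "(MAX y\<in>Y. INF x\<in>U. f x y) \<le> (INF x\<in>U. MAX y\<in>Y. f x y)"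
    using Max_Inf_le_Inf_Max[OF \<open>U \<noteq> {}\<close> Y bdd] .
  ultimately show ?thesis by (rule antisym)
qed

end
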